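(* Let $A,B\in\mathrm{SL}_2\mathbb{R}$ be noncommuting hyperbolic matrices with $\mathrm{tr}(A),\mathrm{tr}(B)\ge 2$, and assume that the pair $A,B$ is coherently oriented with $I^+\cap I^-=\emptyset$. Then $\ell(AB)$ is less than, equal to, or greater than $\ell(A)+\ell(B)$ if and only if the translation axes of $A$ and $B$ are intersecting, asymptotically parallel (distinct, sharing an ideal endpoint), or ultraparallel (disjoint with no common ideal endpoint), respectively.
   Context: $\mathrm{SL}_2\mathbb{R}$ acts on the hyperbolic plane $\mathcal{H}=\{z\in\mathbb{C}:\operatorname{Im}z>0\}$ and on its boundary $\partial\mathcal{H}=\mathbb{P}^1\mathbb{R}$ by Möbius transformations. A nonidentity matrix of trace $\ge 2$ is parabolic (one fixed point in $\partial\mathcal{H}$, trace $=2$) or hyperbolic (two fixed points, trace $>2$). For a hyperbolic $A$, $\alpha^+$ denotes its attracting fixed point and $\alpha^-$ its repelling one (similarly $\beta^\pm$ for $B$); for parabolic $A$, $\alpha^+=\alpha^-$ is its unique fixed point. The translation length is $\ell(A)=\inf\{d(z,A*z):z\in\mathcal{H}\}$ ($d$ the hyperbolic distance); for hyperbolic $A$ the translation axis is the geodesic with endpoints $\alpha^+,\alpha^-$. The circle $\partial\mathcal{H}$ is cyclically (counterclockwise) ordered, and for distinct $\alpha,\beta$ the closed interval $[\alpha,\beta]$ consists of $\alpha,\beta$ and the points met travelling counterclockwise from $\alpha$ to $\beta$. For noncommuting $A,B$ of trace $\ge2$: if $\alpha^+=\beta^+$ let $I^+=\{\alpha^+\}$;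 otherwise $I^+$ is the one of the two intervals $[\alpha^+,\beta^+]$, $[\beta^+,\alpha^+]$ mapped into itself by both $A$ and $B$, if such exists (else $I^+$ is undefined). $I^-$ is defined in the same way using $A^{-1},B^{-1}$ and $\alpha^-,\beta^-$. The pair $A,B$ is coherently oriented if both $I^+$ and $I^-$ are defined. *)

theory Defs
  imports "HOL-Analysis.Analysis"
begin

definition ma :: "real^2^2 \<Rightarrow> real" where "ma A = A $ 1 $ 1"
definition mb :: "real^2^2 \<Rightarrow> real" where "mb A = A $ 1 $ 2"
definition mc :: "real^2^2 \<Rightarrow> real" where "mc A = A $ 2 $ 1"
definition md :: "real^2^2 \<Rightarrow> real" where "md A = A $ 2 $ 2"

definition SL2R :: "real^2^2 \<Rightarrow> bool" where "SL2R A \<longleftrightarrow> det A = 1"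

definition hyperbolic :: "real^2^2 \<Rightarrow> bool" where
  "hyperbolic A \<longleftrightarrow> trace A > 2"

definition uhp :: "complex set" where "uhp = {z. Im z > 0}"

definition mact :: "real^2^2 \<Rightarrow> complex \<Rightarrow> complex" where
  "mact A z = (of_real (ma A) * z + of_real (mb A)) / (of_real (mc A) * z + of_real (md A))"

definition hdist :: "complex \<Rightarrow> complex \<Rightarrow> real" where
  "hdist z w = arcosh (1 + (cmod (z - w))\<^sup>2 / (2 * Im z * Im w))"

definition tlen :: "real^2^2 \<Rightarrow> real" where
  "tlen A = Inf ((\<lambda>z. hdist z (mact A z)) ` uhp)"

text \<open>Boundary P^1(R) = R \<union> {\<infinity>}, modelled as real option (None = \<infinity>),
  with the Moebius action on it.\<close>

type_synonym bpt = "real option"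

fun bact :: "real^2^2 \<Rightarrow> bpt \<Rightarrow> bpt" where
  "bact A None = (if mc A = 0 then None else Some (ma A / mc A))"
| "bact A (Some x) = (if mc A * x + md A = 0 then None
                      else Some ((ma A * x + mb A) / (mc A * x + md A)))"

definition bconv :: "(nat \<Rightarrow> bpt) \<Rightarrow> bpt \<Rightarrow> bool" where
  "bconv s p \<longleftrightarrow> (case p of
      Some r \<Rightarrow> (\<forall>e>0. \<forall>\<^sub>F n in sequentially. \<exists>y. s n = Some y \<and> \<bar>y - r\<bar> < e)
    | None \<Rightarrow> (\<forall>M. \<forall>\<^sub>F n in sequentially. s n = None \<or> (\<exists>y. s n = Some y \<and> \<bar>y\<bar> > M)))"

definition bfixed :: "real^2^2 \<Rightarrow> bpt \<Rightarrow> bool" where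
  "bfixed A p \<longleftrightarrow> bact A p = p"

definition attr :: "real^2^2 \<Rightarrow> bpt" where
  "attr A = (THE p. bfixed A p \<and>
      (\<forall>x. \<not> bfixed A x \<longrightarrow> bconv (\<lambda>n. (bact A ^^ n) x) p))"

definition repel :: "real^2^2 \<Rightarrow> bpt" where
  "repel A = attr (matrix_inv A)"

text \<open>Counterclockwise on the
  boundary of the upper half plane means increasing along R, passing through \<infinity>.
  blt is the linear order on R \<union> {\<infinity>} with \<infinity> on top.\<close>

fun blt :: "bpt \<Rightarrow> bpt \<Rightarrow> bool" where
  "blt (Some x) (Some y) = (x < y)"
| "blt (Some x) None = True"
| "blt None _ = False"

definition cyc_between :: "bpt \<Rightarrow> bpt \<Rightarrow> bpt \<Rightarrow> bool" where
  "cyc_between a x b \<longleftrightarrow>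
     (blt a x \<and> blt x b) \<or> (blt x b \<and> blt b a) \<or> (blt b a \<and> blt a x)"

definition cinterval :: "bpt \<Rightarrow> bpt \<Rightarrow> bpt set" where
  "cinterval a b = {x. x = a \<or> x = b \<or> cyc_between a x b}"

definition inv_both :: "real^2^2 \<Rightarrow> real^2^2 \<Rightarrow> bpt set \<Rightarrow> bool" where
  "inv_both A B I \<longleftrightarrow> bact A ` I \<subseteq> I \<and> bact B ` I \<subseteq> I"

definition Iint :: "real^2^2 \<Rightarrow> real^2^2 \<Rightarrow> bpt \<Rightarrow> bpt \<Rightarrow> bpt set option" where
  "Iint A B a b = (if a = b then Some {a}
     else if inv_both A B (cinterval a b) then Some (cinterval a b)
     else if inv_both A B (cinterval b a) then Some (cinterval b a)
     else None)"

definition Iplus :: "real^2^2 \<Rightarrow> real^2^2 \<Rightarrow> bpt set option" where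
  "Iplus A B = Iint A B (attr A) (attr B)"

definition Iminus :: "real^2^2 \<Rightarrow> real^2^2 \<Rightarrow> bpt set option" where
  "Iminus A B = Iint (matrix_inv A) (matrix_inv B) (repel A) (repel B)"

definition coherently_oriented :: "real^2^2 \<Rightarrow> real^2^2 \<Rightarrow> bool" where
  "coherently_oriented A B \<longleftrightarrow> Iplus A B \<noteq> None \<and> Iminus A B \<noteq> None"

fun geodesic :: "bpt \<Rightarrow> bpt \<Rightarrow> complex set" where
  "geodesic (Some p) (Some q) =
     {z. Im z > 0 \<and> cmod (z - of_real ((p + q) / 2)) = \<bar>p - q\<bar> / 2}"
| "geodesic (Some p) None = {z. Im z > 0 \<and> Re z = p}"
| "geodesic None (Some q) = {z. Im z > 0 \<and> Re z = q}"
| "geodesic None None = {}"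

definition axis :: "real^2^2 \<Rightarrow> complex set" where
  "axis A = geodesic (attr A) (repel A)"

definition axes_intersecting :: "real^2^2 \<Rightarrow> real^2^2 \<Rightarrow> bool" where
  "axes_intersecting A B \<longleftrightarrow> axis A \<inter> axis B \<noteq> {}"

definition axes_asymptotically_parallel :: "real^2^2 \<Rightarrow> real^2^2 \<Rightarrow> bool" where
  "axes_asymptotically_parallel A B \<longleftrightarrow>
     axis A \<noteq> axis B \<and> {attr A, repel A} \<inter> {attr B, repel B} \<noteq> {}"

definition axes_ultraparallel :: "real^2^2 \<Rightarrow> real^2^2 \<Rightarrow> bool" where
  "axes_ultraparallel A B \<longleftrightarrow>
     axis A \<inter> axis B = {} \<and> {attr A, repel A} \<inter> {attr B, repel B} = {}"

end

theory Submission
  imports Defs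
begin

text \<open>
  Let p, q be eigenvectors of A for the eigenvalues l > 1 and 1/l, and r, u eigenvectors of B for
  l' > 1 and 1/l'. Their projective classes are the attracting and repelling points, and
  tlen A = 2 ln l, tlen B = 2 ln l'. Writing [v, w] for the determinant of two vectors, everything
  is governed by the cross ratio c = [p, r] [u, q] / ([p, q] [r, u]), for which
  1 + c = [p, u] [r, q] / ([p, q] [r, u]):
  \<^item> tr (A B) = l l' + 1/(l l') + (l - 1/l) (l' - 1/l') c, and l l' + 1/(l l') is the trace of a
    matrix of translation length 2 ln (l l') = tlen A + tlen B, so tlen (A B) compares with
    tlen A + tlen B as c compares with 0;
  \<^item> the axes meet iff their endpoint pairs separate each other on the circle, i.e. c (1 + c) < 0,
    and they share an endpoint iff c (1 + c) = 0;
  \<^item> coherent orientation with disjoint I+ and I- forces c > -1: an arc invariant under a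
    hyperbolic map that ends at its attracting point does not contain its repelling point, so q and
    u lie on the same side of the chord joining the attracting points p and r.
  Hence all three alternatives are decided by the sign of c.
\<close>

section \<open>Homogeneous coordinates on the boundary\<close>

lemma matrix_mult_entries:
  "ma (A ** B) = ma A * ma B + mb A * mc B"
  "mb (A ** B) = ma A * mb B + mb A * md B"
  "mc (A ** B) = mc A * ma B + md A * mc B"
  "md (A ** B) = mc A * mb B + md A * md B"
  by (simp_all add: ma_def mb_def mc_def md_def matrix_matrix_mult_def sum_2)

lemma det_eq_entries: "det A = ma A * md A - mb A * mc A"
  by (simp add: det_2 ma_def mb_def mc_def md_def)

lemma trace_eq_entries: "trace A = ma A + md A"
  by (simp add: trace_def sum_2 ma_def md_def)

lemma mat1_entries: "ma (mat 1) = 1" "mb (mat 1) = 0" "mc (mat 1) = 0" "md (mat 1) = 1"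
  by (simp_all add: mat_def ma_def mb_def mc_def md_def)

lemma matrix_eq_iff_entries:
  "(A::real^2^2) = B \<longleftrightarrow> ma A = ma B \<and> mb A = mb B \<and> mc A = mc B \<and> md A = md B"
  by (simp add: vec_eq_iff forall_2 ma_def mb_def mc_def md_def)

lemma matrix_inv_mult_self:
  assumes "det (M::real^2^2) \<noteq> 0"
  shows "matrix_inv M ** M = mat 1"
proof -
  have "\<exists>N. M ** N = mat 1 \<and> N ** M = mat 1"
    using assms invertible_det_nz unfolding invertible_def by blast
  then show ?thesis
    unfolding matrix_inv_def by (rule someI2_ex) simp
qed

definition mat_app :: "real^2^2 \<Rightarrow> real \<times> real \<Rightarrow> real \<times> real" where
  "mat_app M v = (ma M * fst v + mb M * snd v, mc M * fst v + md M * snd v)"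

definition wedge :: "real \<times> real \<Rightarrow> real \<times> real \<Rightarrow> real" where
  "wedge v w = fst v * snd w - snd v * fst w"

definition proj_point :: "real \<times> real \<Rightarrow> bpt" where
  "proj_point v = (if snd v = 0 then None else Some (fst v / snd v))"

lemma mat_app_mult: "mat_app (A ** B) v = mat_app A (mat_app B v)"
  by (simp add: mat_app_def matrix_mult_entries algebra_simps)

lemma mat_app_mat1 [simp]: "mat_app (mat 1) v = v"
  by (simp add: mat_app_def mat1_entries)

lemma mat_app_scaleR [simp]: "mat_app M (k *\<^sub>R v) = k *\<^sub>R mat_app M v"
  by (simp add: mat_app_def algebra_simps)

lemma mat_app_add [simp]: "mat_app M (v + w) = mat_app M v + mat_app M w"
  by (simp add: mat_app_def algebra_simps)

lemma wedge_mat_app: "wedge (mat_app M v) (mat_app M w) = det M * wedge v w"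
  by (simp add: wedge_def mat_app_def det_eq_entries algebra_simps)

lemma wedge_commute: "wedge w v = - wedge v w"
  by (simp add: wedge_def)

lemma wedge_self [simp]: "wedge v v = 0"
  by (simp add: wedge_def)

lemma wedge_zero [simp]: "wedge 0 w = 0" "wedge v 0 = 0"
  by (simp_all add: wedge_def)

lemma wedge_scaleR_left [simp]: "wedge (k *\<^sub>R v) w = k * wedge v w"
  and wedge_scaleR_right [simp]: "wedge v (k *\<^sub>R w) = k * wedge v w"
  and wedge_add_left [simp]: "wedge (v + v') w = wedge v w + wedge v' w"
  and wedge_add_right [simp]: "wedge v (w + w') = wedge v w + wedge v w'"
  by (simp_all add: wedge_def algebra_simps)

lemma wedge_eq_0_imp_scaleR:
  assumes "wedge v w = 0" "v \<noteq> 0"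
  obtains k where "w = k *\<^sub>R v"
proof (cases "fst v = 0")
  case True
  then have "snd v \<noteq> 0" using assms(2) by (simp add: prod_eq_iff)
  then show ?thesis using assms True
    by (intro that[of "snd w / snd v"]) (auto simp: prod_eq_iff wedge_def field_simps)
next
  case False
  then show ?thesis using assms
    by (intro that[of "fst w / fst v"]) (auto simp: prod_eq_iff wedge_def field_simps)
qed

lemma basis_combination_exists:
  assumes "wedge p q \<noteq> 0"
  obtains a b where "z = a *\<^sub>R p + b *\<^sub>R q"
proof
  have "wedge p q *\<^sub>R z = wedge z q *\<^sub>R p + wedge p z *\<^sub>R q"
    by (simp add: prod_eq_iff wedge_def algebra_simps)
  then have "z = inverse (wedge p q) *\<^sub>R (wedge z q *\<^sub>R p + wedge p z *\<^sub>R q)"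
    using assms by (metis scaleR_scaleR left_inverse scaleR_one)
  then show "z = (wedge z q / wedge p q) *\<^sub>R p + (wedge p z / wedge p q) *\<^sub>R q"
    by (simp add: scaleR_add_right divide_inverse_commute)
qed

lemma basis_combination_eq_0_iff:
  assumes "wedge p q \<noteq> 0"
  shows "a *\<^sub>R p + b *\<^sub>R q = 0 \<longleftrightarrow> a = 0 \<and> b = 0"
proof
  assume "a *\<^sub>R p + b *\<^sub>R q = 0"
  then have "wedge (a *\<^sub>R p + b *\<^sub>R q) q = 0" "wedge p (a *\<^sub>R p + b *\<^sub>R q) = 0" by simp_all
  then show "a = 0 \<and> b = 0" using assms by simp
qed simp

lemma mat_app_eq_0_iff:
  assumes "det M \<noteq> 0"
  shows "mat_app M v = 0 \<longleftrightarrow> v = 0"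
proof
  assume "mat_app M v = 0"
  then have "det M * wedge v w = 0" for w
    using wedge_mat_app[of M v w] by simp
  from this[of "(0, 1)"] this[of "(1, 0)"] show "v = 0"
    using assms by (simp add: wedge_def prod_eq_iff)
qed (simp add: mat_app_def zero_prod_def)

lemma proj_point_scaleR [simp]: "k \<noteq> 0 \<Longrightarrow> proj_point (k *\<^sub>R v) = proj_point v"
  by (simp add: proj_point_def)

lemma proj_point_surj: "\<exists>v. v \<noteq> 0 \<and> x = proj_point v"
proof (cases x)
  case None
  then show ?thesis by (intro exI[of _ "(1, 0)"]) (simp add: proj_point_def zero_prod_def)
next
  case (Some r)
  then show ?thesis by (intro exI[of _ "(r, 1)"]) (simp add: proj_point_def zero_prod_def)
qed

fun hom_coords :: "bpt \<Rightarrow> real \<times> real" where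
  "hom_coords (Some r) = (r, 1)"
| "hom_coords None = (1, 0)"

lemma scaleR_hom_coords:
  assumes "v \<noteq> 0"
  obtains k where "k \<noteq> 0" "v = k *\<^sub>R hom_coords (proj_point v)"
proof (cases "snd v = 0")
  case True
  then show ?thesis using assms that[of "fst v"] by (simp add: proj_point_def prod_eq_iff)
next
  case False
  then show ?thesis using that[of "snd v"] by (simp add: proj_point_def prod_eq_iff)
qed

lemma wedge_hom_coords_eq_0_iff: "wedge (hom_coords x) (hom_coords y) = 0 \<longleftrightarrow> x = y"
  by (cases x; cases y) (simp_all add: wedge_def)

lemma proj_point_eq_iff:
  assumes "v \<noteq> 0" "w \<noteq> 0"
  shows "proj_point v = proj_point w \<longleftrightarrow> wedge v w = 0"
proof -
  obtain k where "k \<noteq> 0" "v = k *\<^sub>R hom_coords (proj_point v)"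
    using scaleR_hom_coords[OF assms(1)] .
  moreover obtain k' where "k' \<noteq> 0" "w = k' *\<^sub>R hom_coords (proj_point w)"
    using scaleR_hom_coords[OF assms(2)] .
  ultimately show ?thesis
    by (metis wedge_hom_coords_eq_0_iff wedge_scaleR_left wedge_scaleR_right mult_eq_0_iff)
qed

lemma bact_proj_point:
  assumes "v \<noteq> 0"
  shows "bact M (proj_point v) = proj_point (mat_app M v)"
proof -
  obtain k where k: "k \<noteq> 0" "v = k *\<^sub>R hom_coords (proj_point v)"
    using scaleR_hom_coords[OF assms] .
  have "bact M x = proj_point (mat_app M (hom_coords x))" for x
    by (cases x) (simp_all add: proj_point_def mat_app_def)
  then show ?thesis using k by (metis mat_app_scaleR proj_point_scaleR)
qed

definition orientation :: "real \<times> real \<Rightarrow> real \<times> real \<Rightarrow> real \<times> real \<Rightarrow> real" where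
  "orientation a b c = wedge a b * wedge b c * wedge c a"

lemma orientation_reverse: "orientation c b a = - orientation a b c"
  by (simp add: orientation_def wedge_def algebra_simps)

lemma cyc_between_hom_coords_iff:
  "cyc_between x y z \<longleftrightarrow> 0 < orientation (hom_coords x) (hom_coords y) (hom_coords z)"
proof (cases x; cases y; cases z)
  fix r s t assume "x = Some r" "y = Some s" "z = Some t"
  then show ?thesis
    unfolding cyc_between_def orientation_def zero_less_mult_iff mult_less_0_iff by (auto simp: wedge_def)
qed (auto simp: cyc_between_def orientation_def wedge_def)

lemma cyc_between_proj_point_iff:
  assumes "a \<noteq> 0" "x \<noteq> 0" "b \<noteq> 0"
  shows "cyc_between (proj_point a) (proj_point x) (proj_point b) \<longleftrightarrow> 0 < orientation a x b"
proof -
  define a' x' b' where "a' = hom_coords (proj_point a)" "x' = hom_coords (proj_point x)"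
    "b' = hom_coords (proj_point b)"
  obtain k k' k'' where k: "k \<noteq> 0" "k' \<noteq> 0" "k'' \<noteq> 0"
    and coords: "a = k *\<^sub>R a'" "x = k' *\<^sub>R x'" "b = k'' *\<^sub>R b'"
    using scaleR_hom_coords assms unfolding a'_x'_b'_def by metis
  have "orientation a x b = (k * k' * k'')\<^sup>2 * orientation a' x' b'"
    unfolding coords orientation_def by (simp add: power2_eq_square algebra_simps)
  moreover have "(k * k' * k'')\<^sup>2 > 0" using k by simp
  ultimately show ?thesis
    unfolding cyc_between_hom_coords_iff a'_x'_b'_def[symmetric] by (simp add: zero_less_mult_iff)
qed

section \<open>Attracting and repelling points\<close>

lemma bconv_unique:
  assumes "bconv s x" "bconv s y"
  shows "x = y"
proof -
  have "r = r'" if "bconv s (Some r)" "bconv s (Some r')" for r r'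
  proof (rule ccontr)
    assume "r \<noteq> r'"
    define e where "e = \<bar>r - r'\<bar> / 2"
    have "e > 0" using \<open>r \<noteq> r'\<close> by (simp add: e_def)
    then have "\<forall>\<^sub>F n in sequentially. (\<exists>y. s n = Some y \<and> \<bar>y - r\<bar> < e)
        \<and> (\<exists>y. s n = Some y \<and> \<bar>y - r'\<bar> < e)"
      using that by (intro eventually_conj) (simp_all add: bconv_def)
    then obtain y where "\<bar>y - r\<bar> < e" "\<bar>y - r'\<bar> < e"
      by (auto dest: eventually_happens'[OF sequentially_bot])
    then show False unfolding e_def abs_real_def by (auto split: if_splits)
  qed
  moreover have False if "bconv s (Some r)" "bconv s None" for r
  proof -
    have "\<forall>\<^sub>F n in sequentially. (\<exists>y. s n = Some y \<and> \<bar>y - r\<bar> < 1)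
        \<and> (s n = None \<or> (\<exists>y. s n = Some y \<and> \<bar>y\<bar> > \<bar>r\<bar> + 1))"
      using that by (intro eventually_conj) (simp_all add: bconv_def)
    then show False by (auto dest: eventually_happens'[OF sequentially_bot])
  qed
  ultimately show ?thesis using assms by (cases x; cases y) auto
qed

lemma bconv_proj_point_None:
  assumes lim: "v \<longlonglongrightarrow> v0" and "snd v0 = 0" "fst v0 \<noteq> 0"
  shows "bconv (\<lambda>n. proj_point (v n)) None"
proof -
  have "\<forall>\<^sub>F n in sequentially. proj_point (v n) = None \<or> (\<exists>y. proj_point (v n) = Some y \<and> \<bar>y\<bar> > M)" for M
  proof -
    define c where "c = \<bar>fst v0\<bar> / (2 * (\<bar>M\<bar> + 1))"
    have c: "c > 0" using assms(3) by (simp add: c_def)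
    have "\<forall>\<^sub>F n in sequentially. \<bar>fst (v n)\<bar> > \<bar>fst v0\<bar> / 2"
      using tendsto_rabs[OF tendsto_fst[OF lim]] assms(3) by (intro order_tendstoD(1)) auto
    moreover have "\<forall>\<^sub>F n in sequentially. \<bar>snd (v n)\<bar> < c"
      using tendsto_rabs[OF tendsto_snd[OF lim]] assms(2) c by (intro order_tendstoD(2)) auto
    ultimately show ?thesis
    proof eventually_elim
      case (elim n)
      show ?case
      proof (cases "snd (v n) = 0")
        case False
        have "\<bar>M\<bar> + 1 = (\<bar>fst v0\<bar> / 2) / c" using assms(3) by (simp add: c_def field_simps)
        also have "\<dots> < \<bar>fst (v n)\<bar> / c" using elim c by (intro divide_strict_right_mono) auto
        also have "\<dots> \<le> \<bar>fst (v n)\<bar> / \<bar>snd (v n)\<bar>" using elim c False by (intro divide_left_mono) auto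
        finally show ?thesis using False by (simp add: proj_point_def abs_divide)
      qed (simp add: proj_point_def)
    qed
  qed
  then show ?thesis by (simp add: bconv_def)
qed

lemma bconv_proj_point:
  assumes lim: "v \<longlonglongrightarrow> v0" and "v0 \<noteq> 0"
  shows "bconv (\<lambda>n. proj_point (v n)) (proj_point v0)"
proof (cases "snd v0 = 0")
  case True
  then show ?thesis
    using bconv_proj_point_None[OF lim] assms(2) by (simp add: proj_point_def prod_eq_iff)
next
  case False
  have ev: "\<forall>\<^sub>F n in sequentially. snd (v n) \<noteq> 0"
    using tendsto_snd[OF lim] False tendsto_imp_eventually_ne by blast
  have "(\<lambda>n. fst (v n) / snd (v n)) \<longlonglongrightarrow> fst v0 / snd v0"
    using tendsto_fst[OF lim] tendsto_snd[OF lim] False by (rule tendsto_divide)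
  then have close: "\<forall>\<^sub>F n in sequentially. \<bar>fst (v n) / snd (v n) - fst v0 / snd v0\<bar> < e"
    if "e > 0" for e
    using that by (simp add: tendsto_iff dist_real_def)
  have "\<forall>\<^sub>F n in sequentially. \<exists>y. proj_point (v n) = Some y \<and> \<bar>y - fst v0 / snd v0\<bar> < e"
    if "e > 0" for e
    using ev close[OF that] by eventually_elim (simp add: proj_point_def)
  then show ?thesis using False by (simp add: bconv_def proj_point_def)
qed

definition eigvec :: "real^2^2 \<Rightarrow> real \<times> real \<Rightarrow> real \<Rightarrow> bool" where
  "eigvec M v l \<longleftrightarrow> v \<noteq> 0 \<and> mat_app M v = l *\<^sub>R v"

lemma eigvec_exists:
  assumes "\<mu>\<^sup>2 - trace M * \<mu> + det M = 0"
  obtains v where "eigvec M v \<mu>"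
proof -
  have char: "\<mu> * \<mu> - (ma M + md M) * \<mu> + (ma M * md M - mb M * mc M) = 0"
    using assms by (simp add: trace_eq_entries det_eq_entries power2_eq_square)
  \<comment> \<open>each candidate is killed by one row of M - \<mu> I, and then by the other since det (M - \<mu> I) = 0\<close>
  consider "(mb M, \<mu> - ma M) \<noteq> 0" | "(\<mu> - md M, mc M) \<noteq> 0" | "mb M = 0" "mc M = 0" "ma M = \<mu>" "md M = \<mu>"
    by (force simp: zero_prod_def)
  then show ?thesis
  proof cases
    case 1
    then show ?thesis
      using char by (intro that[of "(mb M, \<mu> - ma M)"]) (simp add: eigvec_def mat_app_def algebra_simps)
  next
    case 2
    then show ?thesis
      using char by (intro that[of "(\<mu> - md M, mc M)"]) (auto simp: eigvec_def mat_app_def algebra_simps)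
  next
    case 3
    then show ?thesis by (intro that[of "(1, 0)"]) (simp add: eigvec_def mat_app_def zero_prod_def)
  qed
qed

lemma eigvec_neq_0: "eigvec M v l \<Longrightarrow> v \<noteq> 0"
  by (simp add: eigvec_def)

lemma eigvecs_independent:
  assumes p: "eigvec M p l" and q: "eigvec M q m" and "l \<noteq> m"
  shows "wedge p q \<noteq> 0"
proof
  assume "wedge p q = 0"
  then obtain k where k: "q = k *\<^sub>R p" using wedge_eq_0_imp_scaleR eigvec_neq_0[OF p] by blast
  have "mat_app M q = l *\<^sub>R q" using p unfolding k eigvec_def by simp
  then show False using q \<open>l \<noteq> m\<close> by (auto simp: eigvec_def)
qed

lemma eigvec_proj_point_eq:
  assumes v: "eigvec M v l" and "w \<noteq> 0" "proj_point w = proj_point v"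
  shows "eigvec M w l"
proof -
  have "wedge v w = 0" using assms eigvec_neq_0[OF v] proj_point_eq_iff by metis
  then obtain k where "w = k *\<^sub>R v" using wedge_eq_0_imp_scaleR eigvec_neq_0[OF v] by blast
  then show ?thesis using v \<open>w \<noteq> 0\<close> by (simp add: eigvec_def)
qed

lemma wedge_eigvec_entries:
  assumes "eigvec M p l" "eigvec M q m"
  shows "ma M * wedge p q = l * fst p * snd q - m * snd p * fst q"
    and "mb M * wedge p q = (m - l) * fst p * fst q"
    and "mc M * wedge p q = (l - m) * snd p * snd q"
    and "md M * wedge p q = m * fst p * snd q - l * snd p * fst q"
proof -
  have p: "ma M * fst p + mb M * snd p = l * fst p" "mc M * fst p + md M * snd p = l * snd p"
    and q: "ma M * fst q + mb M * snd q = m * fst q" "mc M * fst q + md M * snd q = m * snd q"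
    using assms by (simp_all add: eigvec_def mat_app_def prod_eq_iff)
  have "ma M * wedge p q = snd q * (ma M * fst p + mb M * snd p) - snd p * (ma M * fst q + mb M * snd q)"
    and "mb M * wedge p q = fst p * (ma M * fst q + mb M * snd q) - fst q * (ma M * fst p + mb M * snd p)"
    and "mc M * wedge p q = snd q * (mc M * fst p + md M * snd p) - snd p * (mc M * fst q + md M * snd q)"
    and "md M * wedge p q = fst p * (mc M * fst q + md M * snd q) - fst q * (mc M * fst p + md M * snd p)"
    by (simp_all add: wedge_def algebra_simps)
  then show "ma M * wedge p q = l * fst p * snd q - m * snd p * fst q"
    and "mb M * wedge p q = (m - l) * fst p * fst q"
    and "mc M * wedge p q = (l - m) * snd p * snd q"
    and "md M * wedge p q = m * fst p * snd q - l * snd p * fst q"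
    unfolding p q by (simp_all add: algebra_simps)
qed

lemma trace_eq_eigenvalues:
  assumes "eigvec M p l" "eigvec M q m" "wedge p q \<noteq> 0"
  shows "trace M = l + m"
proof -
  have "trace M * wedge p q = (l + m) * wedge p q"
    using wedge_eigvec_entries[OF assms(1,2)]
    by (simp add: trace_eq_entries distrib_right) (simp add: wedge_def algebra_simps)
  then show ?thesis using assms(3) by simp
qed

lemma det_eq_eigenvalues:
  assumes "eigvec M p l" "eigvec M q m" "wedge p q \<noteq> 0"
  shows "det M = l * m"
proof -
  have "det M * wedge p q = wedge (mat_app M p) (mat_app M q)" by (rule wedge_mat_app[symmetric])
  also have "\<dots> = (l * m) * wedge p q" using assms(1,2) by (simp add: eigvec_def)
  finally show ?thesis using assms(3) by simp
qed

lemma matrix_eq_on_basis: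
  assumes "wedge p q \<noteq> 0" and "mat_app M p = mat_app N p" "mat_app M q = mat_app N q"
  shows "M = N"
proof -
  have "mat_app M v = mat_app N v" for v
  proof -
    obtain a b where "v = a *\<^sub>R p + b *\<^sub>R q" using basis_combination_exists[OF assms(1)] .
    then show ?thesis using assms(2,3) by simp
  qed
  from this[of "(1, 0)"] this[of "(0, 1)"] show ?thesis
    by (simp add: mat_app_def matrix_eq_iff_entries)
qed

lemma commute_if_common_eigvecs:
  assumes "eigvec A p l" "eigvec A q m" "eigvec B p l'" "eigvec B q m'" "wedge p q \<noteq> 0"
  shows "A ** B = B ** A"
  using assms(5) by (rule matrix_eq_on_basis) (use assms in \<open>simp_all add: mat_app_mult eigvec_def\<close>)

lemma eigvec_matrix_inv:
  assumes "det M \<noteq> 0" and v: "eigvec M v l"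
  shows "eigvec (matrix_inv M) v (1 / l)"
proof -
  have "l \<noteq> 0"
    using v mat_app_eq_0_iff[OF assms(1), of v] by (auto simp: eigvec_def)
  have "v = mat_app (matrix_inv M ** M) v" by (simp add: matrix_inv_mult_self[OF assms(1)])
  also have "\<dots> = l *\<^sub>R mat_app (matrix_inv M) v" using v by (simp add: mat_app_mult eigvec_def)
  finally have "(1 / l) *\<^sub>R v = (1 / l) *\<^sub>R (l *\<^sub>R mat_app (matrix_inv M) v)" by (rule arg_cong)
  then show ?thesis using v \<open>l \<noteq> 0\<close> by (simp add: eigvec_def)
qed

lemma funpow_mat_app_basis_combination:
  assumes "eigvec M p l" "eigvec M q m"
  shows "(mat_app M ^^ n) (a *\<^sub>R p + b *\<^sub>R q) = (l ^ n * a) *\<^sub>R p + (m ^ n * b) *\<^sub>R q"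
  by (induction n) (use assms in \<open>simp_all add: eigvec_def mult_ac\<close>)

lemma funpow_bact_proj_point:
  assumes "det M \<noteq> 0" "v \<noteq> 0"
  shows "(bact M ^^ n) (proj_point v) = proj_point ((mat_app M ^^ n) v)"
proof -
  have "(mat_app M ^^ n) v \<noteq> 0" for n
    by (induction n) (simp_all add: assms mat_app_eq_0_iff)
  then show ?thesis
    by (induction n) (simp_all add: bact_proj_point)
qed

lemma bconv_orbit_eigvec:
  assumes p: "eigvec M p l" and q: "eigvec M q m" and pq: "wedge p q \<noteq> 0"
    and "m \<noteq> 0" "\<bar>m\<bar> < \<bar>l\<bar>" and "x \<noteq> proj_point q"
  shows "bconv (\<lambda>n. (bact M ^^ n) x) (proj_point p)"
proof -
  have "l \<noteq> 0" using assms by auto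
  have det: "det M \<noteq> 0" using det_eq_eigenvalues[OF p q pq] \<open>m \<noteq> 0\<close> \<open>l \<noteq> 0\<close> by simp
  obtain z where z: "z \<noteq> 0" "x = proj_point z" using proj_point_surj by blast
  obtain a b where ab: "z = a *\<^sub>R p + b *\<^sub>R q" using basis_combination_exists[OF pq] .
  have "a \<noteq> 0"
  proof
    assume "a = 0"
    then have "b \<noteq> 0" using z ab by auto
    then show False using \<open>a = 0\<close> ab z \<open>x \<noteq> proj_point q\<close> by simp
  qed
  have orbit: "(bact M ^^ n) x = proj_point (a *\<^sub>R p + ((m / l) ^ n * b) *\<^sub>R q)" for n
  proof -
    have "(bact M ^^ n) x = proj_point ((l ^ n * a) *\<^sub>R p + (m ^ n * b) *\<^sub>R q)"
      using funpow_bact_proj_point[OF det z(1)] funpow_mat_app_basis_combination[OF p q] z ab by simp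
    also have "(l ^ n * a) *\<^sub>R p + (m ^ n * b) *\<^sub>R q = l ^ n *\<^sub>R (a *\<^sub>R p + ((m / l) ^ n * b) *\<^sub>R q)"
      using \<open>l \<noteq> 0\<close> by (simp add: scaleR_add_right power_divide)
    finally show ?thesis using \<open>l \<noteq> 0\<close> by simp
  qed
  have "norm (m / l) < 1" using assms by (simp add: abs_divide divide_less_eq_1)
  then have "(\<lambda>n. (m / l) ^ n) \<longlonglongrightarrow> 0" by (rule LIMSEQ_power_zero)
  then have "(\<lambda>n. a *\<^sub>R p + ((m / l) ^ n * b) *\<^sub>R q) \<longlonglongrightarrow> a *\<^sub>R p + (0 * b) *\<^sub>R q"
    by (intro tendsto_add tendsto_scaleR tendsto_mult tendsto_const)
  then have "bconv (\<lambda>n. proj_point (a *\<^sub>R p + ((m / l) ^ n * b) *\<^sub>R q)) (proj_point (a *\<^sub>R p))"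
    using bconv_proj_point \<open>a \<noteq> 0\<close> eigvec_neq_0[OF p] by fastforce
  then show ?thesis using \<open>a \<noteq> 0\<close> unfolding orbit by simp
qed

lemma attr_eq_eigvec:
  assumes p: "eigvec M p l" and q: "eigvec M q m" and pq: "wedge p q \<noteq> 0"
    and "m \<noteq> 0" "\<bar>m\<bar> < \<bar>l\<bar>"
  shows "attr M = proj_point p"
proof -
  have "l \<noteq> 0" using assms by auto
  have fixed: "bfixed M (proj_point v)" if "eigvec M v \<mu>" "\<mu> \<noteq> 0" for v \<mu>
    using that bact_proj_point by (simp add: bfixed_def eigvec_def)
  have moving: "\<not> bfixed M (proj_point (p + q))"
  proof -
    have nz: "p + q \<noteq> 0" "l *\<^sub>R p + m *\<^sub>R q \<noteq> 0"
      using basis_combination_eq_0_iff[OF pq, of 1 1] basis_combination_eq_0_iff[OF pq, of l m] \<open>l \<noteq> 0\<close>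
      by auto
    have "wedge (l *\<^sub>R p + m *\<^sub>R q) (p + q) = (l - m) * wedge p q"
      by (simp add: wedge_commute[of q p] algebra_simps)
    moreover have "l \<noteq> m" using assms by auto
    ultimately have "proj_point (l *\<^sub>R p + m *\<^sub>R q) \<noteq> proj_point (p + q)"
      using pq proj_point_eq_iff[OF nz(2,1)] by simp
    then show ?thesis
      using bact_proj_point[OF nz(1)] p q by (simp add: bfixed_def eigvec_def)
  qed
  have conv: "bconv (\<lambda>n. (bact M ^^ n) x) (proj_point p)" if "\<not> bfixed M x" for x
    using bconv_orbit_eigvec[OF p q pq] assms fixed[OF q] that by metis
  show ?thesis unfolding attr_def
  proof (rule the_equality)
    show "bfixed M (proj_point p) \<and> (\<forall>x. \<not> bfixed M x \<longrightarrow> bconv (\<lambda>n. (bact M ^^ n) x) (proj_point p))"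
      using fixed[OF p \<open>l \<noteq> 0\<close>] conv by blast
  next
    fix y assume "bfixed M y \<and> (\<forall>x. \<not> bfixed M x \<longrightarrow> bconv (\<lambda>n. (bact M ^^ n) x) y)"
    then show "y = proj_point p" using moving conv bconv_unique by blast
  qed
qed

lemma repel_eq_eigvec:
  assumes p: "eigvec M p l" and q: "eigvec M q m" and pq: "wedge p q \<noteq> 0"
    and "m \<noteq> 0" "\<bar>m\<bar> < \<bar>l\<bar>"
  shows "repel M = proj_point q"
proof -
  have det: "det M \<noteq> 0" using det_eq_eigenvalues[OF p q pq] assms by auto
  have "\<bar>1 / l\<bar> < \<bar>1 / m\<bar>" using assms by (simp add: frac_less2)
  then show ?thesis
    unfolding repel_def using assms pq wedge_commute[of p q]
    by (intro attr_eq_eigvec[OF eigvec_matrix_inv[OF det q] eigvec_matrix_inv[OF det p]]) auto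
qed

section \<open>Translation length\<close>

lemma mact_denominator_neq_0:
  assumes "SL2R M" "0 < Im z"
  shows "of_real (mc M) * z + of_real (md M) \<noteq> 0"
proof
  assume "of_real (mc M) * z + of_real (md M) = 0"
  then have "mc M * Im z = 0" "mc M * Re z + md M = 0" by (simp_all add: complex_eq_iff)
  then show False using assms by (simp add: SL2R_def det_eq_entries)
qed

lemma Im_mact:
  assumes "SL2R M"
  shows "Im (mact M z) = Im z / (cmod (of_real (mc M) * z + of_real (md M)))\<^sup>2"
proof -
  let ?num = "of_real (ma M) * z + of_real (mb M)" and ?den = "of_real (mc M) * z + of_real (md M)"
  have "Im (mact M z) = (Im ?num * Re ?den - Re ?num * Im ?den) / (cmod ?den)\<^sup>2"
    unfolding mact_def by (rule Im_divide')
  also have "Im ?num * Re ?den - Re ?num * Im ?den = Im z * det M"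
    by (simp add: det_eq_entries algebra_simps)
  finally show ?thesis using assms by (simp add: SL2R_def)
qed

lemma hdist_mact:
  assumes "SL2R M" and y: "0 < Im z"
  shows "hdist z (mact M z) =
    arcosh ((trace M)\<^sup>2 / 2 - 1 + ((mc M * (cmod z)\<^sup>2 + (md M - ma M) * Re z - mb M) / Im z)\<^sup>2 / 2)"
proof -
  define a b c d where "a = ma M" "b = mb M" "c = mc M" "d = md M"
  have det: "a * d - b * c = 1" using assms(1) by (simp add: SL2R_def det_eq_entries a_b_c_d_def)
  define w where "w = of_real c * z + of_real d"
  define Q where "Q = of_real c * z\<^sup>2 + of_real (d - a) * z - of_real b"
  define R where "R = c * (cmod z)\<^sup>2 + (d - a) * Re z - b"
  have "w \<noteq> 0" using mact_denominator_neq_0[OF assms] by (simp add: w_def a_b_c_d_def)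
  have diff: "z - mact M z = Q / w"
    using \<open>w \<noteq> 0\<close> unfolding mact_def Q_def w_def a_b_c_d_def by (simp add: field_simps power2_eq_square)
  have ReQ: "Re Q = R - 2 * c * (Im z)\<^sup>2" and ImQ: "Im Q = Im z * (2 * c * Re z + d - a)"
    unfolding Q_def R_def cmod_power2 by (simp_all add: power2_eq_square algebra_simps)
  have "(Im Q)\<^sup>2 = (Im z)\<^sup>2 * ((a + d)\<^sup>2 - 4 * (a * d - b * c)) + 4 * c * (Im z)\<^sup>2 * (Re Q + c * (Im z)\<^sup>2)"
    unfolding ReQ ImQ R_def cmod_power2 by (simp add: power2_eq_square algebra_simps)
  then have ImQ2: "(Im Q)\<^sup>2 = (Im z)\<^sup>2 * ((a + d)\<^sup>2 - 4) + 4 * c * (Im z)\<^sup>2 * (Re Q + c * (Im z)\<^sup>2)"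
    using det by simp
  have "(cmod (Q / w))\<^sup>2 = ((Re Q)\<^sup>2 + (Im Q)\<^sup>2) / (cmod w)\<^sup>2"
    by (simp add: norm_divide power_divide cmod_power2)
  then have "1 + (cmod (z - mact M z))\<^sup>2 / (2 * Im z * Im (mact M z)) = 1 + ((Re Q)\<^sup>2 + (Im Q)\<^sup>2) / (2 * (Im z)\<^sup>2)"
    unfolding diff Im_mact[OF assms(1)] w_def[symmetric] a_b_c_d_def[symmetric]
    using \<open>w \<noteq> 0\<close> y by (simp add: field_simps power2_eq_square)
  also have "\<dots> = (a + d)\<^sup>2 / 2 - 1 + (R / Im z)\<^sup>2 / 2"
    unfolding ImQ2 using y by (simp add: ReQ field_simps power2_eq_square)
  finally show ?thesis
    unfolding hdist_def a_b_c_d_def R_def by (simp only: trace_eq_entries)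
qed

lemma exists_point_on_translation_axis:
  assumes "SL2R M" "4 < (trace M)\<^sup>2"
  obtains z where "0 < Im z" "mc M * (cmod z)\<^sup>2 + (md M - ma M) * Re z - mb M = 0"
proof -
  define a b c d where "a = ma M" "b = mb M" "c = mc M" "d = md M"
  have det: "a * d - b * c = 1" using assms(1) by (simp add: SL2R_def det_eq_entries a_b_c_d_def)
  have disc: "(a - d)\<^sup>2 + 4 * b * c > 0"
  proof -
    have "(a - d)\<^sup>2 + 4 * b * c = (trace M)\<^sup>2 - 4 * (a * d - b * c)"
      by (simp add: trace_eq_entries a_b_c_d_def power2_eq_square algebra_simps)
    then show ?thesis using det assms(2) by simp
  qed
  show ?thesis
  proof (cases "c = 0")
    case True
    then have "a \<noteq> d" using disc by auto
    then show ?thesis using True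
      by (intro that[of "Complex (b / (d - a)) 1"]) (simp_all add: a_b_c_d_def[symmetric])
  next
    case False
    define x y where "x = (a - d) / (2 * c)" "y = sqrt ((a - d)\<^sup>2 + 4 * b * c) / (2 * \<bar>c\<bar>)"
    have "0 < y" using disc False by (simp add: x_y_def)
    moreover have "c * (x\<^sup>2 + y\<^sup>2) + (d - a) * x - b = 0"
      using disc False by (simp add: x_y_def power_divide power_mult_distrib field_simps power2_eq_square)
    ultimately show ?thesis
      by (intro that[of "Complex x y"]) (simp_all add: cmod_power2 a_b_c_d_def[symmetric])
  qed
qed

lemma tlen_eq_arcosh_trace:
  assumes "SL2R M" "4 < (trace M)\<^sup>2"
  shows "tlen M = arcosh ((trace M)\<^sup>2 / 2 - 1)"
  unfolding tlen_def
proof (rule cInf_eq_minimum)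
  obtain z where "0 < Im z" "mc M * (cmod z)\<^sup>2 + (md M - ma M) * Re z - mb M = 0"
    using exists_point_on_translation_axis[OF assms] .
  then show "arcosh ((trace M)\<^sup>2 / 2 - 1) \<in> (\<lambda>z. hdist z (mact M z)) ` uhp"
    using hdist_mact[OF assms(1)] unfolding uhp_def by force
next
  fix d assume "d \<in> (\<lambda>z. hdist z (mact M z)) ` uhp"
  then obtain z where "0 < Im z" "d = hdist z (mact M z)" by (auto simp: uhp_def)
  then obtain e where d: "d = arcosh ((trace M)\<^sup>2 / 2 - 1 + e\<^sup>2 / 2)"
    using hdist_mact[OF assms(1)] by blast
  have "1 \<le> (trace M)\<^sup>2 / 2 - 1" using assms(2) by simp
  then show "arcosh ((trace M)\<^sup>2 / 2 - 1) \<le> d"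
    unfolding d by (subst not_less[symmetric], subst arcosh_less_iff_real) (auto intro: add_increasing2)
qed

lemma arcosh_trace_eigenvalue:
  assumes "1 \<le> (l::real)"
  shows "arcosh ((l + 1 / l)\<^sup>2 / 2 - 1) = 2 * ln l"
proof -
  have "(l + 1 / l)\<^sup>2 / 2 - 1 = (l\<^sup>2 + inverse (l\<^sup>2)) / 2"
    using assms by (simp add: power2_eq_square field_simps)
  also have "\<dots> = cosh (ln (l\<^sup>2))" using assms by (simp add: cosh_ln_real)
  finally show ?thesis using assms by (simp add: arcosh_cosh_real ln_realpow)
qed

lemma arcosh_trace_less_iff:
  fixes s t :: real
  assumes "2 \<le> s" "2 \<le> t"
  shows "arcosh (s\<^sup>2 / 2 - 1) < arcosh (t\<^sup>2 / 2 - 1) \<longleftrightarrow> s < t"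
proof -
  have "4 \<le> s\<^sup>2" "4 \<le> t\<^sup>2"
    using assms power_mono[of 2 s 2] power_mono[of 2 t 2] by simp_all
  then have "arcosh (s\<^sup>2 / 2 - 1) < arcosh (t\<^sup>2 / 2 - 1) \<longleftrightarrow> s\<^sup>2 < t\<^sup>2" by simp
  also have "\<dots> \<longleftrightarrow> s < t" using assms by (auto intro: power2_less_imp_less power_strict_mono)
  finally show ?thesis .
qed

section \<open>Geodesics\<close>

text \<open>geodesic_form p q z is the real part of (snd p z - fst p) times the conjugate of (snd q z - fst q).\<close>

definition geodesic_form :: "real \<times> real \<Rightarrow> real \<times> real \<Rightarrow> complex \<Rightarrow> real" where
  "geodesic_form p q z =
     snd p * snd q * (cmod z)\<^sup>2 - (fst p * snd q + fst q * snd p) * Re z + fst p * fst q"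

lemma geodesic_form_scaleR [simp]:
  "geodesic_form (k *\<^sub>R p) (k' *\<^sub>R q) z = k * k' * geodesic_form p q z"
  by (simp add: geodesic_form_def algebra_simps)

lemma geodesic_hom_coords:
  assumes "x \<noteq> y"
  shows "geodesic x y = {z. 0 < Im z \<and> geodesic_form (hom_coords x) (hom_coords y) z = 0}"
proof (cases x; cases y)
  fix r s assume xy: "x = Some r" "y = Some s"
  have "cmod (z - of_real ((r + s) / 2)) = \<bar>r - s\<bar> / 2 \<longleftrightarrow> (cmod z)\<^sup>2 - (r + s) * Re z + r * s = 0"
    for z
  proof -
    have "cmod (z - of_real ((r + s) / 2)) = \<bar>r - s\<bar> / 2 \<longleftrightarrow>
        (cmod (z - of_real ((r + s) / 2)))\<^sup>2 = (\<bar>r - s\<bar> / 2)\<^sup>2"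
      by (simp add: power2_eq_iff_nonneg)
    moreover have "(cmod (z - of_real ((r + s) / 2)))\<^sup>2 - (\<bar>r - s\<bar> / 2)\<^sup>2
        = (cmod z)\<^sup>2 - (r + s) * Re z + r * s"
      unfolding cmod_power2 power_divide power2_abs by (simp add: power2_eq_square field_simps)
    ultimately show ?thesis by (metis eq_iff_diff_eq_0)
  qed
  then show ?thesis using xy by (auto simp: geodesic_form_def)
qed (use assms in \<open>auto simp: geodesic_form_def\<close>)

lemma geodesic_proj_point:
  assumes "wedge p q \<noteq> 0"
  shows "geodesic (proj_point p) (proj_point q) = {z. 0 < Im z \<and> geodesic_form p q z = 0}"
proof -
  have "p \<noteq> 0" "q \<noteq> 0" using assms by auto
  then obtain k k' where k: "k \<noteq> 0" "k' \<noteq> 0"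
    and "p = k *\<^sub>R hom_coords (proj_point p)" "q = k' *\<^sub>R hom_coords (proj_point q)"
    using scaleR_hom_coords by metis
  then have "geodesic_form p q z
      = k * k' * geodesic_form (hom_coords (proj_point p)) (hom_coords (proj_point q)) z" for z
    by (metis geodesic_form_scaleR)
  moreover have "proj_point p \<noteq> proj_point q" using assms \<open>p \<noteq> 0\<close> \<open>q \<noteq> 0\<close> proj_point_eq_iff by blast
  ultimately show ?thesis using k by (simp add: geodesic_hom_coords)
qed

lemma geodesic_neq_empty: "x \<noteq> y \<Longrightarrow> geodesic x y \<noteq> {}"
proof (cases x; cases y)
  fix r s assume "x \<noteq> y" "x = Some r" "y = Some s"
  then have "Complex ((r + s) / 2) (\<bar>r - s\<bar> / 2) \<in> geodesic x y" by (simp add: cmod_def)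
  then show ?thesis by blast
next
  fix r assume "x = Some r" "y = None"
  then have "Complex r 1 \<in> geodesic x y" by simp
  then show ?thesis by blast
next
  fix s assume "x = None" "y = Some s"
  then have "Complex s 1 \<in> geodesic x y" by simp
  then show ?thesis by blast
qed simp

text \<open>A triple (U1, U2, U3) describes the circle or line U1 (x^2 + y^2) + U2 x + U3 = 0, which is
  orthogonal to the real axis.\<close>

lemma circles_meet_imp_discriminant_pos:
  fixes U1 U2 U3 V1 V2 V3 x y :: real
  assumes "\<not> (U1 * V2 = U2 * V1 \<and> U2 * V3 = U3 * V2 \<and> U3 * V1 = U1 * V3)"
    and y: "0 < y" and U: "U1 * (x\<^sup>2 + y\<^sup>2) + U2 * x + U3 = 0" and V: "V1 * (x\<^sup>2 + y\<^sup>2) + V2 * x + V3 = 0"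
  shows "(U3 * V1 - U1 * V3)\<^sup>2 < (U2 * V3 - U3 * V2) * (U1 * V2 - U2 * V1)"
proof -
  define D where "D = U1 * V2 - U2 * V1"
  have w: "D * (x\<^sup>2 + y\<^sup>2) = U2 * V3 - U3 * V2"
  proof -
    have "D * (x\<^sup>2 + y\<^sup>2) - (U2 * V3 - U3 * V2)
        = V2 * (U1 * (x\<^sup>2 + y\<^sup>2) + U2 * x + U3) - U2 * (V1 * (x\<^sup>2 + y\<^sup>2) + V2 * x + V3)"
      unfolding D_def by (simp add: algebra_simps)
    then show ?thesis using U V by simp
  qed
  have x: "D * x = U3 * V1 - U1 * V3"
  proof -
    have "D * x - (U3 * V1 - U1 * V3)
        = U1 * (V1 * (x\<^sup>2 + y\<^sup>2) + V2 * x + V3) - V1 * (U1 * (x\<^sup>2 + y\<^sup>2) + U2 * x + U3)"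
      unfolding D_def by (simp add: algebra_simps)
    then show ?thesis using U V by simp
  qed
  have "D \<noteq> 0" using assms(1) w x unfolding D_def by auto
  then have "0 < D\<^sup>2 * y\<^sup>2" using y by simp
  moreover have "(U2 * V3 - U3 * V2) * D - (U3 * V1 - U1 * V3)\<^sup>2 = D\<^sup>2 * y\<^sup>2"
    unfolding w[symmetric] x[symmetric] by (simp add: power2_eq_square algebra_simps)
  ultimately show ?thesis unfolding D_def by linarith
qed

lemma circles_meet_if_discriminant_pos:
  fixes U1 U2 U3 V1 V2 V3 :: real
  assumes G: "(U3 * V1 - U1 * V3)\<^sup>2 < (U2 * V3 - U3 * V2) * (U1 * V2 - U2 * V1)"
  obtains x y where "0 < y" "U1 * (x\<^sup>2 + y\<^sup>2) + U2 * x + U3 = 0" "V1 * (x\<^sup>2 + y\<^sup>2) + V2 * x + V3 = 0"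
proof -
  define D where "D = U1 * V2 - U2 * V1"
  have "D \<noteq> 0" using G unfolding D_def by auto
  define x w where "x = (U3 * V1 - U1 * V3) / D" "w = (U2 * V3 - U3 * V2) / D"
  have "w - x\<^sup>2 = ((U2 * V3 - U3 * V2) * D - (U3 * V1 - U1 * V3)\<^sup>2) / D\<^sup>2"
    unfolding x_w_def using \<open>D \<noteq> 0\<close> by (simp add: field_simps power2_eq_square)
  then have "0 < w - x\<^sup>2" using G \<open>D \<noteq> 0\<close> unfolding D_def by simp
  define y where "y = sqrt (w - x\<^sup>2)"
  have "0 < y" "x\<^sup>2 + y\<^sup>2 = w" using \<open>0 < w - x\<^sup>2\<close> by (simp_all add: y_def)
  moreover have "U1 * w + U2 * x + U3 = 0"
  proof -
    have "U1 * w + U2 * x + U3 = (U1 * (U2 * V3 - U3 * V2) + U2 * (U3 * V1 - U1 * V3) + U3 * D) / D"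
      unfolding x_w_def using \<open>D \<noteq> 0\<close> by (simp add: field_simps)
    then show ?thesis unfolding D_def by (simp add: algebra_simps)
  qed
  moreover have "V1 * w + V2 * x + V3 = 0"
  proof -
    have "V1 * w + V2 * x + V3 = (V1 * (U2 * V3 - U3 * V2) + V2 * (U3 * V1 - U1 * V3) + V3 * D) / D"
      unfolding x_w_def using \<open>D \<noteq> 0\<close> by (simp add: field_simps)
    then show ?thesis unfolding D_def by (simp add: algebra_simps)
  qed
  ultimately show ?thesis using that by metis
qed

lemma circles_meet_in_upper_half_plane_iff:
  fixes U1 U2 U3 V1 V2 V3 :: real
  assumes "\<not> (U1 * V2 = U2 * V1 \<and> U2 * V3 = U3 * V2 \<and> U3 * V1 = U1 * V3)"
  shows "(\<exists>x y. 0 < y \<and> U1 * (x\<^sup>2 + y\<^sup>2) + U2 * x + U3 = 0 \<and> V1 * (x\<^sup>2 + y\<^sup>2) + V2 * x + V3 = 0)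
    \<longleftrightarrow> (U3 * V1 - U1 * V3)\<^sup>2 < (U2 * V3 - U3 * V2) * (U1 * V2 - U2 * V1)"
  using circles_meet_imp_discriminant_pos[OF assms] circles_meet_if_discriminant_pos by metis

lemma quadratic_forms_common_root:
  fixes U1 U2 U3 V1 V2 V3 s t :: real
  assumes "U1 * V2 = U2 * V1" "U2 * V3 = U3 * V2" "U3 * V1 = U1 * V3"
    and "\<not> (V1 = 0 \<and> V2 = 0 \<and> V3 = 0)" and "V1 * s\<^sup>2 + V2 * s * t + V3 * t\<^sup>2 = 0"
  shows "U1 * s\<^sup>2 + U2 * s * t + U3 * t\<^sup>2 = 0"
proof -
  define F where "F = U1 * s\<^sup>2 + U2 * s * t + U3 * t\<^sup>2"
  define G where "G = V1 * s\<^sup>2 + V2 * s * t + V3 * t\<^sup>2"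
  have "V1 * F - U1 * G = (U2 * V1 - U1 * V2) * s * t + (U3 * V1 - U1 * V3) * t\<^sup>2"
    and "V2 * F - U2 * G = (U1 * V2 - U2 * V1) * s\<^sup>2 + (U3 * V2 - U2 * V3) * t\<^sup>2"
    and "V3 * F - U3 * G = (U1 * V3 - U3 * V1) * s\<^sup>2 + (U2 * V3 - U3 * V2) * s * t"
    unfolding F_def G_def by (simp_all add: algebra_simps)
  then have "V1 * F = 0" "V2 * F = 0" "V3 * F = 0"
    using assms(1-3,5) unfolding G_def by simp_all
  then show ?thesis using assms(4) unfolding F_def by auto
qed

lemma proj_points_eq_if_common_roots:
  assumes "wedge p q \<noteq> 0" "wedge r u \<noteq> 0"
    and roots: "\<And>t. wedge t r * wedge t u = 0 \<Longrightarrow> wedge t p * wedge t q = 0"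
  shows "{proj_point p, proj_point q} = {proj_point r, proj_point u}"
proof -
  have nz: "p \<noteq> 0" "q \<noteq> 0" "r \<noteq> 0" "u \<noteq> 0" using assms(1,2) by auto
  have "proj_point t \<in> {proj_point p, proj_point q}" if "t \<noteq> 0" "wedge t r * wedge t u = 0" for t
    using roots[OF that(2)] proj_point_eq_iff[OF that(1)] nz by auto
  from this[of r] this[of u] have "{proj_point r, proj_point u} \<subseteq> {proj_point p, proj_point q}"
    using nz by simp
  moreover have "proj_point r \<noteq> proj_point u" using assms(2) nz proj_point_eq_iff by blast
  ultimately show ?thesis by auto
qed

lemma geodesics_meet_iff_exists:
  assumes "wedge p q \<noteq> 0" "wedge r u \<noteq> 0"
  shows "geodesic (proj_point p) (proj_point q) \<inter> geodesic (proj_point r) (proj_point u) \<noteq> {}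
    \<longleftrightarrow> (\<exists>x y. 0 < y \<and> geodesic_form p q (Complex x y) = 0 \<and> geodesic_form r u (Complex x y) = 0)"
proof
  assume "geodesic (proj_point p) (proj_point q) \<inter> geodesic (proj_point r) (proj_point u) \<noteq> {}"
  then obtain z where "z \<in> geodesic (proj_point p) (proj_point q)" "z \<in> geodesic (proj_point r) (proj_point u)"
    by blast
  then show "\<exists>x y. 0 < y \<and> geodesic_form p q (Complex x y) = 0 \<and> geodesic_form r u (Complex x y) = 0"
    by (intro exI[of _ "Re z"] exI[of _ "Im z"]) (simp add: geodesic_proj_point assms)
next
  assume "\<exists>x y. 0 < y \<and> geodesic_form p q (Complex x y) = 0 \<and> geodesic_form r u (Complex x y) = 0"
  then obtain x y where "0 < y" "geodesic_form p q (Complex x y) = 0" "geodesic_form r u (Complex x y) = 0"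
    by blast
  then have "Complex x y \<in> geodesic (proj_point p) (proj_point q) \<inter> geodesic (proj_point r) (proj_point u)"
    by (simp add: geodesic_proj_point assms)
  then show "geodesic (proj_point p) (proj_point q) \<inter> geodesic (proj_point r) (proj_point u) \<noteq> {}"
    by blast
qed

lemma geodesics_meet_iff:
  assumes pq: "wedge p q \<noteq> 0" and ru: "wedge r u \<noteq> 0"
    and distinct: "{proj_point p, proj_point q} \<noteq> {proj_point r, proj_point u}"
  shows "geodesic (proj_point p) (proj_point q) \<inter> geodesic (proj_point r) (proj_point u) \<noteq> {}
    \<longleftrightarrow> wedge p r * wedge u q * (wedge p u * wedge r q) < 0"
proof -
  define U1 U2 U3 where "U1 = snd p * snd q" "U2 = - (fst p * snd q + fst q * snd p)" "U3 = fst p * fst q"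
  define V1 V2 V3 where "V1 = snd r * snd u" "V2 = - (fst r * snd u + fst u * snd r)" "V3 = fst r * fst u"
  have not_proportional: "\<not> (U1 * V2 = U2 * V1 \<and> U2 * V3 = U3 * V2 \<and> U3 * V1 = U1 * V3)"
  proof
    assume minors: "U1 * V2 = U2 * V1 \<and> U2 * V3 = U3 * V2 \<and> U3 * V1 = U1 * V3"
    have "V2\<^sup>2 - 4 * V1 * V3 = (wedge r u)\<^sup>2"
      unfolding V1_V2_V3_def wedge_def by (simp add: power2_eq_square algebra_simps)
    then have "\<not> (V1 = 0 \<and> V2 = 0 \<and> V3 = 0)" using ru by auto
    moreover have "wedge t p * wedge t q = U1 * (fst t)\<^sup>2 + U2 * fst t * snd t + U3 * (snd t)\<^sup>2"
      and "wedge t r * wedge t u = V1 * (fst t)\<^sup>2 + V2 * fst t * snd t + V3 * (snd t)\<^sup>2" for t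
      unfolding U1_U2_U3_def V1_V2_V3_def wedge_def by (simp_all add: power2_eq_square algebra_simps)
    ultimately have "{proj_point p, proj_point q} = {proj_point r, proj_point u}"
      using quadratic_forms_common_root[of U1 V2 U2 V1 V3 U3] minors
      by (intro proj_points_eq_if_common_roots[OF pq ru]) simp
    with distinct show False ..
  qed
  have form_pq: "geodesic_form p q (Complex x y) = U1 * (x\<^sup>2 + y\<^sup>2) + U2 * x + U3"
    and form_ru: "geodesic_form r u (Complex x y) = V1 * (x\<^sup>2 + y\<^sup>2) + V2 * x + V3" for x y
    unfolding geodesic_form_def U1_U2_U3_def V1_V2_V3_def cmod_power2 by (simp_all add: algebra_simps)
  have "(U2 * V3 - U3 * V2) * (U1 * V2 - U2 * V1) - (U3 * V1 - U1 * V3)\<^sup>2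
      = - (wedge p r * wedge u q * (wedge p u * wedge r q))"
    unfolding U1_U2_U3_def V1_V2_V3_def wedge_def by (simp add: power2_eq_square algebra_simps)
  then show ?thesis
    unfolding geodesics_meet_iff_exists[OF pq ru] form_pq form_ru
      circles_meet_in_upper_half_plane_iff[OF not_proportional]
    by linarith
qed

section \<open>Invariant arcs and the cross ratio\<close>

lemma proj_point_notin_cinterval:
  assumes "a \<noteq> 0" "w \<noteq> 0" "b \<noteq> 0" and "orientation a w b < 0"
  shows "proj_point w \<notin> cinterval (proj_point a) (proj_point b)"
proof -
  have "wedge a w \<noteq> 0" "wedge w b \<noteq> 0" using assms(4) by (auto simp: orientation_def)
  then have "proj_point w \<noteq> proj_point a" "proj_point w \<noteq> proj_point b"
    using proj_point_eq_iff assms(1-3) wedge_commute[of w a] by auto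
  then show ?thesis
    using assms cyc_between_proj_point_iff[OF assms(1-3)] by (auto simp: cinterval_def)
qed

lemma orientation_mat_app_eigvecs:
  assumes p: "eigvec M p l" and q: "eigvec M q m" and pq: "wedge p q \<noteq> 0"
  shows "orientation p (mat_app M z) z = - (m * (l - m) * (wedge z p / wedge p q)\<^sup>2) * orientation p q z"
proof -
  obtain a b where z: "z = a *\<^sub>R p + b *\<^sub>R q" using basis_combination_exists[OF pq] .
  have "wedge z p / wedge p q = - b" using pq unfolding z by (simp add: wedge_commute[of q p])
  moreover have "mat_app M z = (l * a) *\<^sub>R p + (m * b) *\<^sub>R q"
    using p q unfolding z by (simp add: eigvec_def mult.commute)
  ultimately show ?thesis
    unfolding z orientation_def by (simp add: wedge_commute[of q p] power2_eq_square algebra_simps)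
qed

text \<open>M moves z towards its attracting point p, hence out of the arc from p through q to z.\<close>

lemma bact_leaves_cinterval:
  assumes p: "eigvec M p l" and q: "eigvec M q m" and pq: "wedge p q \<noteq> 0" and "0 < m" "m < l"
    and "z \<noteq> 0"
  shows "cyc_between (proj_point p) (proj_point q) (proj_point z)
      \<Longrightarrow> bact M (proj_point z) \<notin> cinterval (proj_point p) (proj_point z)"
    and "cyc_between (proj_point z) (proj_point q) (proj_point p)
      \<Longrightarrow> bact M (proj_point z) \<notin> cinterval (proj_point z) (proj_point p)"
proof -
  define w where "w = mat_app M z"
  define c where "c = m * (l - m) * (wedge z p / wedge p q)\<^sup>2"
  have "det M \<noteq> 0" using det_eq_eigenvalues[OF p q pq] assms(4,5) by simp
  then have nz: "p \<noteq> 0" "q \<noteq> 0" "w \<noteq> 0"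
    using pq assms(6) mat_app_eq_0_iff unfolding w_def by auto
  have act: "bact M (proj_point z) = proj_point w"
    using bact_proj_point[OF assms(6)] by (simp add: w_def)
  have sign: "orientation p w z = - c * orientation p q z"
    unfolding w_def c_def by (rule orientation_mat_app_eigvecs[OF p q pq])
  have c: "0 < c" if "orientation p q z \<noteq> 0"
    using that pq assms(4,5) by (auto simp: c_def orientation_def)
  show "bact M (proj_point z) \<notin> cinterval (proj_point p) (proj_point z)"
    if "cyc_between (proj_point p) (proj_point q) (proj_point z)"
  proof -
    have "0 < orientation p q z" using that cyc_between_proj_point_iff nz assms(6) by blast
    then have "orientation p w z < 0" using c unfolding sign by (simp add: mult_pos_pos)
    then show ?thesis
      unfolding act using proj_point_notin_cinterval nz assms(6) by blast
  qed
  show "bact M (proj_point z) \<notin> cinterval (proj_point z) (proj_point p)"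
    if "cyc_between (proj_point z) (proj_point q) (proj_point p)"
  proof -
    have "orientation p q z < 0"
      using that cyc_between_proj_point_iff nz assms(6) orientation_reverse[of z q p] by auto
    then have "orientation z w p < 0"
      using c orientation_reverse[of z w p] unfolding sign by (simp add: mult_pos_neg)
    then show ?thesis
      unfolding act using proj_point_notin_cinterval nz assms(6) by blast
  qed
qed

definition cross_ratio :: "real \<times> real \<Rightarrow> real \<times> real \<Rightarrow> real \<times> real \<Rightarrow> real \<times> real \<Rightarrow> real" where
  "cross_ratio p q r u = wedge p r * wedge u q / (wedge p q * wedge r u)"

lemma one_plus_cross_ratio:
  assumes "wedge p q \<noteq> 0" "wedge r u \<noteq> 0"
  shows "1 + cross_ratio p q r u = wedge p u * wedge r q / (wedge p q * wedge r u)"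
proof -
  have "wedge p q * wedge r u + wedge p r * wedge u q = wedge p u * wedge r q"
    by (simp add: wedge_def algebra_simps)
  then show ?thesis using assms by (simp add: cross_ratio_def field_simps)
qed

lemma cross_ratio_eq_0_iff:
  assumes "wedge p q \<noteq> 0" "wedge r u \<noteq> 0"
  shows "cross_ratio p q r u = 0 \<longleftrightarrow> wedge p r = 0 \<or> wedge q u = 0"
  using assms by (auto simp: cross_ratio_def wedge_commute[of q u])

lemma cross_ratio_eq_minus_one_iff:
  assumes "wedge p q \<noteq> 0" "wedge r u \<noteq> 0"
  shows "cross_ratio p q r u = -1 \<longleftrightarrow> wedge p u = 0 \<or> wedge q r = 0"
  using one_plus_cross_ratio[OF assms] assms by (auto simp: wedge_commute[of q r] add_eq_0_iff)

lemma wedge_product_cross_ratio: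
  assumes "wedge p q \<noteq> 0" "wedge r u \<noteq> 0"
  shows "wedge p r * wedge u q * (wedge p u * wedge r q)
    = (wedge p q * wedge r u)\<^sup>2 * (cross_ratio p q r u * (1 + cross_ratio p q r u))"
  unfolding one_plus_cross_ratio[OF assms] using assms
  by (simp add: cross_ratio_def power2_eq_square field_simps)

lemma orientation_product_cross_ratio:
  assumes "wedge p q \<noteq> 0" "wedge r u \<noteq> 0"
  shows "orientation p q r * orientation p u r = (wedge p r * wedge p q * wedge r u)\<^sup>2 * (1 + cross_ratio p q r u)"
  unfolding one_plus_cross_ratio[OF assms] using assms
  by (simp add: orientation_def wedge_commute[of r q] wedge_commute[of r u] wedge_commute[of p r]
      power2_eq_square field_simps)

lemma trace_mult_eigvecs:
  assumes A: "eigvec A p l" "eigvec A q m" and B: "eigvec B r l'" "eigvec B u m'"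
    and pq: "wedge p q \<noteq> 0" and ru: "wedge r u \<noteq> 0"
  shows "trace (A ** B) = l * l' + m * m' + (l - m) * (l' - m') * cross_ratio p q r u"
proof -
  have "wedge p q * wedge r u * trace (A ** B)
      = (ma A * wedge p q) * (ma B * wedge r u) + (mb A * wedge p q) * (mc B * wedge r u)
        + (mc A * wedge p q) * (mb B * wedge r u) + (md A * wedge p q) * (md B * wedge r u)"
    by (simp add: trace_eq_entries matrix_mult_entries algebra_simps)
  also have "\<dots> = wedge p q * wedge r u * (l * l' + m * m') + (l - m) * (l' - m') * (wedge p r * wedge u q)"
    unfolding wedge_eigvec_entries[OF A] wedge_eigvec_entries[OF B] by (simp add: wedge_def algebra_simps)
  finally show ?thesis using pq ru by (simp add: cross_ratio_def field_simps)
qed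

section \<open>Hyperbolic matrices and pairs of them\<close>

locale hyperbolic_eigenbasis =
  fixes M :: "real^2^2" and p q :: "real \<times> real" and l :: real
  assumes SL2R: "SL2R M" and eigenvalue_gt_1: "1 < l"
    and attracting_eigvec: "eigvec M p l" and repelling_eigvec: "eigvec M q (1 / l)"
begin

lemma eigenvalues_ordered: "0 < 1 / l" "1 / l < l"
  using eigenvalue_gt_1 by (simp_all add: divide_less_eq less_1_mult)

lemma eigvecs_neq_0: "p \<noteq> 0" "q \<noteq> 0"
  using attracting_eigvec repelling_eigvec by (simp_all add: eigvec_def)

lemma wedge_eigvecs_neq_0: "wedge p q \<noteq> 0"
  using eigvecs_independent[OF attracting_eigvec repelling_eigvec] eigenvalues_ordered by simp

lemma attr_eq: "attr M = proj_point p"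
  using attr_eq_eigvec[OF attracting_eigvec repelling_eigvec wedge_eigvecs_neq_0] eigenvalues_ordered by simp

lemma repel_eq: "repel M = proj_point q"
  using repel_eq_eigvec[OF attracting_eigvec repelling_eigvec wedge_eigvecs_neq_0] eigenvalues_ordered by simp

lemma axis_eq: "axis M = geodesic (proj_point p) (proj_point q)"
  by (simp add: axis_def attr_eq repel_eq)

lemma tlen_eq: "tlen M = 2 * ln l"
proof -
  have trace: "trace M = l + 1 / l"
    using trace_eq_eigenvalues[OF attracting_eigvec repelling_eigvec wedge_eigvecs_neq_0] .
  have "l + 1 / l - 2 = (l - 1)\<^sup>2 / l"
    using eigenvalue_gt_1 by (simp add: field_simps power2_eq_square)
  moreover have "0 < (l - 1)\<^sup>2 / l" using eigenvalue_gt_1 by simp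
  ultimately have "2 < trace M" unfolding trace by linarith
  then have "4 < (trace M)\<^sup>2" using power_strict_mono[of 2 "trace M" 2] by simp
  then show ?thesis
    using tlen_eq_arcosh_trace[OF SL2R] arcosh_trace_eigenvalue eigenvalue_gt_1 trace by simp
qed

lemma invariant_cinterval_orientation:
  assumes "z \<noteq> 0"
  shows "bact M ` cinterval (proj_point p) (proj_point z) \<subseteq> cinterval (proj_point p) (proj_point z)
      \<Longrightarrow> orientation p q z \<le> 0"
    and "bact M ` cinterval (proj_point z) (proj_point p) \<subseteq> cinterval (proj_point z) (proj_point p)
      \<Longrightarrow> 0 \<le> orientation p q z"
proof -
  note leaves = bact_leaves_cinterval[OF attracting_eigvec repelling_eigvec wedge_eigvecs_neq_0
      eigenvalues_ordered assms]
  show "orientation p q z \<le> 0"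
    if "bact M ` cinterval (proj_point p) (proj_point z) \<subseteq> cinterval (proj_point p) (proj_point z)"
    using that leaves(1) cyc_between_proj_point_iff[OF eigvecs_neq_0 assms] by (force simp: cinterval_def)
  show "0 \<le> orientation p q z"
    if "bact M ` cinterval (proj_point z) (proj_point p) \<subseteq> cinterval (proj_point z) (proj_point p)"
    using that leaves(2) cyc_between_proj_point_iff[OF assms eigvecs_neq_0(2,1)] orientation_reverse[of z q p]
    by (force simp: cinterval_def)
qed

end

lemma hyperbolic_eigenbasis_exists:
  assumes "SL2R M" "hyperbolic M"
  obtains p q l where "hyperbolic_eigenbasis M p q l"
proof -
  define t where "t = trace M"
  have "2 < t" using assms(2) by (simp add: hyperbolic_def t_def)
  then have "4 < t\<^sup>2" using power_strict_mono[of 2 t 2] by simp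
  define s where "s = sqrt (t\<^sup>2 - 4)"
  have "0 < s" "s\<^sup>2 = t\<^sup>2 - 4" using \<open>4 < t\<^sup>2\<close> by (simp_all add: s_def)
  define l where "l = (t + s) / 2"
  have "1 < l" using \<open>2 < t\<close> \<open>0 < s\<close> by (simp add: l_def)
  have "l * ((t - s) / 2) = (t\<^sup>2 - s\<^sup>2) / 4" by (simp add: l_def power2_eq_square field_simps)
  then have inv: "1 / l = (t - s) / 2" using \<open>s\<^sup>2 = t\<^sup>2 - 4\<close> \<open>1 < l\<close> by (simp add: field_simps)
  have "l\<^sup>2 - t * l + 1 = (s\<^sup>2 - (t\<^sup>2 - 4)) / 4"
    unfolding l_def by (simp add: power2_eq_square field_simps)
  moreover have "(1 / l)\<^sup>2 - t * (1 / l) + 1 = (s\<^sup>2 - (t\<^sup>2 - 4)) / 4"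
    unfolding inv by (simp add: power2_eq_square field_simps)
  ultimately have "l\<^sup>2 - trace M * l + det M = 0" "(1 / l)\<^sup>2 - trace M * (1 / l) + det M = 0"
    using assms(1) \<open>s\<^sup>2 = t\<^sup>2 - 4\<close> by (simp_all add: SL2R_def t_def)
  then obtain p q where "eigvec M p l" "eigvec M q (1 / l)" using eigvec_exists by metis
  then show ?thesis using that assms(1) \<open>1 < l\<close> by (simp add: hyperbolic_eigenbasis_def)
qed

lemma Iint_endpoints: "Iint M N a b = Some I \<Longrightarrow> a \<in> I \<and> b \<in> I"
  unfolding Iint_def by (auto split: if_splits simp: cinterval_def)

lemma Iint_invariant_cinterval:
  "Iint M N a b \<noteq> None \<Longrightarrow> a \<noteq> b \<Longrightarrow> inv_both M N (cinterval a b) \<or> inv_both M N (cinterval b a)"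
  unfolding Iint_def by (auto split: if_splits)

locale hyperbolic_pair =
  A: hyperbolic_eigenbasis A p q l + B: hyperbolic_eigenbasis B r u l'
  for A p q l B r u l'
begin

lemma trace_mult:
  "trace (A ** B) = l * l' + 1 / (l * l') + (l - 1 / l) * (l' - 1 / l') * cross_ratio p q r u"
  using trace_mult_eigvecs[OF A.attracting_eigvec A.repelling_eigvec B.attracting_eigvec
      B.repelling_eigvec A.wedge_eigvecs_neq_0 B.wedge_eigvecs_neq_0] by simp

text \<open>I+ is an arc between p and r invariant under A and B, so neither repelling point lies inside it:
  q and u lie on the same side of the chord joining p and r.\<close>

lemma orientation_product_nonneg:
  assumes "Iplus A B \<noteq> None" and "wedge p r \<noteq> 0"
  shows "0 \<le> orientation p q r * orientation p u r"
proof -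
  have "proj_point p \<noteq> proj_point r"
    using assms(2) proj_point_eq_iff A.eigvecs_neq_0 B.eigvecs_neq_0 by blast
  then have "inv_both A B (cinterval (proj_point p) (proj_point r))
      \<or> inv_both A B (cinterval (proj_point r) (proj_point p))"
    using Iint_invariant_cinterval assms(1) by (simp add: Iplus_def A.attr_eq B.attr_eq)
  then show ?thesis
    using A.invariant_cinterval_orientation[OF B.eigvecs_neq_0(1)]
      B.invariant_cinterval_orientation[OF A.eigvecs_neq_0(1)] orientation_reverse[of r u p]
    by (auto simp: inv_both_def zero_le_mult_iff)
qed

lemma cross_ratio_gt_minus_one:
  assumes "coherently_oriented A B" and "the (Iplus A B) \<inter> the (Iminus A B) = {}"
  shows "-1 < cross_ratio p q r u"
proof -
  obtain I J where I: "Iplus A B = Some I" and J: "Iminus A B = Some J"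
    using assms(1) by (auto simp: coherently_oriented_def)
  have "proj_point p \<in> I" "proj_point r \<in> I" "proj_point q \<in> J" "proj_point u \<in> J"
    using Iint_endpoints I J
    by (simp_all add: Iplus_def Iminus_def A.attr_eq B.attr_eq A.repel_eq B.repel_eq)
  then have "proj_point p \<noteq> proj_point u" "proj_point r \<noteq> proj_point q" using assms(2) I J by auto
  then have "wedge p u \<noteq> 0" "wedge r q \<noteq> 0"
    using proj_point_eq_iff A.eigvecs_neq_0 B.eigvecs_neq_0 by blast+
  then have "cross_ratio p q r u \<noteq> -1"
    using cross_ratio_eq_minus_one_iff[OF A.wedge_eigvecs_neq_0 B.wedge_eigvecs_neq_0]
    by (simp add: wedge_commute[of r q])
  moreover have "0 \<le> 1 + cross_ratio p q r u"
  proof (cases "wedge p r = 0")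
    case True
    then show ?thesis by (simp add: cross_ratio_def)
  next
    case False
    then have "0 \<le> (wedge p r * wedge p q * wedge r u)\<^sup>2 * (1 + cross_ratio p q r u)"
      using orientation_product_nonneg I
      unfolding orientation_product_cross_ratio[OF A.wedge_eigvecs_neq_0 B.wedge_eigvecs_neq_0] by simp
    then show ?thesis
      using False A.wedge_eigvecs_neq_0 B.wedge_eigvecs_neq_0 by (simp add: zero_le_mult_iff)
  qed
  ultimately show ?thesis by linarith
qed

lemma tlen_mult_cases:
  assumes "-1 < cross_ratio p q r u"
  shows "tlen (A ** B) < tlen A + tlen B \<longleftrightarrow> cross_ratio p q r u < 0"
    and "tlen (A ** B) = tlen A + tlen B \<longleftrightarrow> cross_ratio p q r u = 0"
    and "tlen A + tlen B < tlen (A ** B) \<longleftrightarrow> 0 < cross_ratio p q r u"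
proof -
  define S k where "S = l * l' + 1 / (l * l')" "k = (l - 1 / l) * (l' - 1 / l')"
  have "0 < k" using A.eigenvalues_ordered B.eigenvalues_ordered by (simp add: S_k_def)
  have T: "trace (A ** B) = S + k * cross_ratio p q r u" using trace_mult by (simp add: S_k_def)
  \<comment> \<open>S is the trace of a matrix with eigenvalue l l', whose translation length is tlen A + tlen B\<close>
  have "1 < l" "1 < l'" using A.eigenvalue_gt_1 B.eigenvalue_gt_1 .
  have "S - k - 2 = (l - l')\<^sup>2 / (l * l')"
    unfolding S_k_def using \<open>1 < l\<close> \<open>1 < l'\<close> by (simp add: field_simps power2_eq_square)
  moreover have "0 \<le> (l - l')\<^sup>2 / (l * l')" using \<open>1 < l\<close> \<open>1 < l'\<close> by simp
  ultimately have "2 \<le> S - k" by linarith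
  then have S2: "2 \<le> S" and T2: "2 < trace (A ** B)"
    using \<open>0 < k\<close> assms mult_strict_left_mono[of "-1" "cross_ratio p q r u" k] unfolding T by simp_all
  have "SL2R (A ** B)" using A.SL2R B.SL2R by (simp add: SL2R_def det_mul)
  then have tlen_AB: "tlen (A ** B) = arcosh ((trace (A ** B))\<^sup>2 / 2 - 1)"
    using T2 power_strict_mono[of 2 "trace (A ** B)" 2] by (intro tlen_eq_arcosh_trace) simp_all
  have "1 < l * l'" using \<open>1 < l\<close> \<open>1 < l'\<close> by (simp add: less_1_mult)
  then have tlen_sum: "tlen A + tlen B = arcosh (S\<^sup>2 / 2 - 1)"
    using \<open>1 < l\<close> \<open>1 < l'\<close>
    by (simp add: A.tlen_eq B.tlen_eq S_k_def arcosh_trace_eigenvalue ln_mult distrib_left)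
  have less: "tlen (A ** B) < tlen A + tlen B \<longleftrightarrow> trace (A ** B) < S"
    and greater: "tlen A + tlen B < tlen (A ** B) \<longleftrightarrow> S < trace (A ** B)"
    unfolding tlen_AB tlen_sum using arcosh_trace_less_iff S2 T2 by simp_all
  show "tlen (A ** B) < tlen A + tlen B \<longleftrightarrow> cross_ratio p q r u < 0"
    unfolding less T using \<open>0 < k\<close> by (simp add: mult_less_0_iff)
  show "tlen A + tlen B < tlen (A ** B) \<longleftrightarrow> 0 < cross_ratio p q r u"
    unfolding greater T using \<open>0 < k\<close> by (simp add: zero_less_mult_iff)
  then show "tlen (A ** B) = tlen A + tlen B \<longleftrightarrow> cross_ratio p q r u = 0"
    using \<open>tlen (A ** B) < tlen A + tlen B \<longleftrightarrow> cross_ratio p q r u < 0\<close> by linarith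
qed

lemma axes_endpoints_distinct:
  assumes "A ** B \<noteq> B ** A" and "cross_ratio p q r u \<noteq> -1"
  shows "{proj_point p, proj_point q} \<noteq> {proj_point r, proj_point u}"
proof
  assume "{proj_point p, proj_point q} = {proj_point r, proj_point u}"
  moreover have "proj_point p \<noteq> proj_point u"
    using assms(2) cross_ratio_eq_minus_one_iff[OF A.wedge_eigvecs_neq_0 B.wedge_eigvecs_neq_0]
      proj_point_eq_iff A.eigvecs_neq_0 B.eigvecs_neq_0 by blast
  ultimately have "proj_point p = proj_point r" "proj_point q = proj_point u"
    by (auto simp: doubleton_eq_iff)
  then have "eigvec B p l'" "eigvec B q (1 / l')"
    using eigvec_proj_point_eq B.attracting_eigvec B.repelling_eigvec A.eigvecs_neq_0 by metis+
  then show False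
    using commute_if_common_eigvecs[OF A.attracting_eigvec A.repelling_eigvec _ _ A.wedge_eigvecs_neq_0]
      assms(1) by blast
qed

lemma axes_meet_iff:
  assumes "A ** B \<noteq> B ** A" and "-1 < cross_ratio p q r u"
  shows "axis A \<inter> axis B \<noteq> {} \<longleftrightarrow> cross_ratio p q r u < 0"
proof -
  note pq = A.wedge_eigvecs_neq_0 and ru = B.wedge_eigvecs_neq_0
  have distinct: "{proj_point p, proj_point q} \<noteq> {proj_point r, proj_point u}"
    using axes_endpoints_distinct assms by force
  show ?thesis
    unfolding A.axis_eq B.axis_eq geodesics_meet_iff[OF pq ru distinct] wedge_product_cross_ratio[OF pq ru]
    using pq ru assms(2) by (simp add: mult_less_0_iff)
qed

lemma common_endpoint_iff:
  assumes "-1 < cross_ratio p q r u"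
  shows "{attr A, repel A} \<inter> {attr B, repel B} \<noteq> {} \<longleftrightarrow> cross_ratio p q r u = 0"
proof -
  note nz = A.eigvecs_neq_0 B.eigvecs_neq_0
  have "{attr A, repel A} \<inter> {attr B, repel B} \<noteq> {} \<longleftrightarrow>
      proj_point p = proj_point r \<or> proj_point p = proj_point u
      \<or> proj_point q = proj_point r \<or> proj_point q = proj_point u"
    unfolding A.attr_eq A.repel_eq B.attr_eq B.repel_eq by auto
  also have "\<dots> \<longleftrightarrow> wedge p r = 0 \<or> wedge p u = 0 \<or> wedge q r = 0 \<or> wedge q u = 0"
    using proj_point_eq_iff[OF nz(1,3)] proj_point_eq_iff[OF nz(1,4)]
      proj_point_eq_iff[OF nz(2,3)] proj_point_eq_iff[OF nz(2,4)] by simp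
  also have "\<dots> \<longleftrightarrow> cross_ratio p q r u = 0"
    using assms cross_ratio_eq_0_iff[OF A.wedge_eigvecs_neq_0 B.wedge_eigvecs_neq_0]
      cross_ratio_eq_minus_one_iff[OF A.wedge_eigvecs_neq_0 B.wedge_eigvecs_neq_0] by auto
  finally show ?thesis .
qed

lemma axes_cases:
  assumes "A ** B \<noteq> B ** A" and "-1 < cross_ratio p q r u"
  shows "axes_intersecting A B \<longleftrightarrow> cross_ratio p q r u < 0"
    and "axes_asymptotically_parallel A B \<longleftrightarrow> cross_ratio p q r u = 0"
    and "axes_ultraparallel A B \<longleftrightarrow> 0 < cross_ratio p q r u"
proof -
  have "axis A \<noteq> {}"
    unfolding A.axis_eq using geodesic_neq_empty proj_point_eq_iff A.eigvecs_neq_0 A.wedge_eigvecs_neq_0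
    by metis
  then show "axes_intersecting A B \<longleftrightarrow> cross_ratio p q r u < 0"
    and "axes_asymptotically_parallel A B \<longleftrightarrow> cross_ratio p q r u = 0"
    and "axes_ultraparallel A B \<longleftrightarrow> 0 < cross_ratio p q r u"
    unfolding axes_intersecting_def axes_asymptotically_parallel_def axes_ultraparallel_def
    using axes_meet_iff[OF assms] common_endpoint_iff[OF assms(2)] by auto
qed

end

theorem theorem2p5:
  fixes A B :: "real^2^2"
  assumes "SL2R A" and "SL2R B"
    and "A ** B \<noteq> B ** A"
    and "hyperbolic A" and "hyperbolic B"
    and "trace A \<ge> 2" and "trace B \<ge> 2"
    and "coherently_oriented A B"
    and "the (Iplus A B) \<inter> the (Iminus A B) = {}"
  shows "(tlen (A ** B) < tlen A + tlen B \<longleftrightarrow> axes_intersecting A B)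
       \<and> (tlen (A ** B) = tlen A + tlen B \<longleftrightarrow> axes_asymptotically_parallel A B)
       \<and> (tlen (A ** B) > tlen A + tlen B \<longleftrightarrow> axes_ultraparallel A B)"
proof -
  obtain p q l where "hyperbolic_eigenbasis A p q l"
    using hyperbolic_eigenbasis_exists assms(1,4) .
  moreover obtain r u l' where "hyperbolic_eigenbasis B r u l'"
    using hyperbolic_eigenbasis_exists assms(2,5) .
  ultimately interpret hyperbolic_pair A p q l B r u l'
    by (simp add: hyperbolic_pair_def)
  have "-1 < cross_ratio p q r u"
    using cross_ratio_gt_minus_one assms(8,9) .
  then show ?thesis
    using tlen_mult_cases axes_cases[OF assms(3)] by simp
qed

end
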